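(* Let $k$ be an uncountable algebraically closed field and let $A$ be a just infinite $k$-algebra which is countably generated as a $k$-algebra and does not satisfy a polynomial identity. Then $A$ is stably just infinite.
   Context: All rings are associative unital algebras over a field. A $k$-algebra $A$ is called just infinite if $\dim_k(A)=\infty$ and every nonzero two-sided ideal of $A$ has finite codimension in $A$. A just infinite $k$-algebra $A$ is stably just infinite if $A\otimes_k K$ is just infinite over $K$ for every field extension $K/k$. *)

theory Defs
  imports "HOL-Computational_Algebra.Polynomial" "HOL-Library.Countable_Set"
begin

definition is_algebra :: "('k::field \<Rightarrow> 'a::ring_1 \<Rightarrow> 'a) \<Rightarrow> bool" where
  "is_algebra sc \<longleftrightarrow> vector_space sc \<and>
     (\<forall>c x y. sc c (x * y) = sc c x * y \<and> sc c (x * y) = x * sc c y)"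

definition two_sided_ideal :: "'a::ring_1 set \<Rightarrow> bool" where
  "two_sided_ideal I \<longleftrightarrow> 0 \<in> I \<and> (\<forall>x\<in>I. \<forall>y\<in>I. x + y \<in> I) \<and> (\<forall>x\<in>I. - x \<in> I) \<and>
     (\<forall>x\<in>I. \<forall>a. a * x \<in> I \<and> x * a \<in> I)"

definition infinite_dim :: "('k::field \<Rightarrow> 'a::ring_1 \<Rightarrow> 'a) \<Rightarrow> bool" where
  "infinite_dim sc \<longleftrightarrow> \<not> (\<exists>F. finite F \<and> module.span sc F = UNIV)"

text \<open>Finite codimension of a subspace I: the quotient A/I is spanned by finitely many cosets.\<close>
definition finite_codim :: "('k::field \<Rightarrow> 'a::ring_1 \<Rightarrow> 'a) \<Rightarrow> 'a set \<Rightarrow> bool" where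
  "finite_codim sc I \<longleftrightarrow> (\<exists>F. finite F \<and> (\<forall>a. \<exists>b\<in>module.span sc F. a - b \<in> I))"

definition just_infinite :: "('k::field \<Rightarrow> 'a::ring_1 \<Rightarrow> 'a) \<Rightarrow> bool" where
  "just_infinite sc \<longleftrightarrow> is_algebra sc \<and> infinite_dim sc \<and>
     (\<forall>I. two_sided_ideal I \<and> I \<noteq> {0} \<longrightarrow> finite_codim sc I)"

definition subalg_gen :: "('k::field \<Rightarrow> 'a::ring_1 \<Rightarrow> 'a) \<Rightarrow> 'a set \<Rightarrow> 'a set" where
  "subalg_gen sc S = \<Inter>{B. S \<subseteq> B \<and> 1 \<in> B \<and> (\<forall>x\<in>B. \<forall>y\<in>B. x + y \<in> B \<and> x * y \<in> B) \<and>
      (\<forall>c. \<forall>x\<in>B. sc c x \<in> B)}"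

definition countably_generated :: "('k::field \<Rightarrow> 'a::ring_1 \<Rightarrow> 'a) \<Rightarrow> bool" where
  "countably_generated sc \<longleftrightarrow> (\<exists>S. countable S \<and> subalg_gen sc S = UNIV)"

text \<open>A noncommutative polynomial in variables x_0, x_1, ... over k
  (element of the free algebra) is given by its finitely supported coefficient function on
  words (lists of variable indices); it is evaluated at an assignment of the variables.\<close>
definition ncpoly_eval :: "('k::field \<Rightarrow> 'a::ring_1 \<Rightarrow> 'a) \<Rightarrow> (nat list \<Rightarrow> 'k) \<Rightarrow> (nat \<Rightarrow> 'a) \<Rightarrow> 'a"
  where "ncpoly_eval sc f x = (\<Sum>w\<in>{w. f w \<noteq> 0}. sc (f w) (prod_list (map x w)))"

definition satisfies_PI :: "('k::field \<Rightarrow> 'a::ring_1 \<Rightarrow> 'a) \<Rightarrow> bool" where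
  "satisfies_PI sc \<longleftrightarrow> (\<exists>f :: nat list \<Rightarrow> 'k. finite {w. f w \<noteq> 0} \<and> {w. f w \<noteq> 0} \<noteq> {} \<and>
      (\<forall>x. ncpoly_eval sc f x = 0))"

text \<open>Base change: T (a K-algebra, K a field extension of k via the embedding iota) is
  A tensor_k K, realised via a k-algebra homomorphism phi : A -> T whose K-linear extension
  A tensor_k K -> T is bijective, i.e. phi(A) spans T over K and phi maps k-linearly independent
  sets injectively onto K-linearly independent sets.\<close>
definition base_change ::
  "('k::field \<Rightarrow> 'a::ring_1 \<Rightarrow> 'a) \<Rightarrow> ('k \<Rightarrow> 'K::field) \<Rightarrow> ('K \<Rightarrow> 't::ring_1 \<Rightarrow> 't) \<Rightarrow> ('a \<Rightarrow> 't) \<Rightarrow> bool"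
  where
  "base_change sc iota tsc phi \<longleftrightarrow>
     is_algebra sc \<and> is_algebra tsc \<and>
     iota 1 = 1 \<and> (\<forall>x y. iota (x + y) = iota x + iota y \<and> iota (x * y) = iota x * iota y) \<and>
     phi 1 = 1 \<and> (\<forall>x y. phi (x + y) = phi x + phi y \<and> phi (x * y) = phi x * phi y) \<and>
     (\<forall>c x. phi (sc c x) = tsc (iota c) (phi x)) \<and>
     module.span tsc (range phi) = UNIV \<and>
     (\<forall>F. \<not> module.dependent sc F \<longrightarrow> inj_on phi F \<and> \<not> module.dependent tsc (phi ` F))"

end

(*
  Let I be a nonzero ideal of A (x)_k K and choose an element sum_i a_i (x) mu_i of I with
  the fewest terms. Minimality makes the mu_i linearly independent over k and shows that,
  for a fixed index j0, the coefficients a_i with i ~= j0 are determined by a_j0. The possible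
  a_j0 form a nonzero ideal J of A, and the maps a_j0 |-> a_i are A-bimodule maps on J.

  Such a bimodule map f agrees with a scalar c on a smaller nonzero ideal. Otherwise every f - c
  is injective on J, so the ideals (f - c)(J) are nonzero and have finite codimension, and
  uncountably many of them have codimension at most some d. An element x in all of them has
  preimages y_c with f y_c = x + c y_c; an eigenvector argument on the span of finitely many
  y_c shows that they are linearly independent, which is impossible in an algebra of
  countable dimension. So x = 0, while the standard polynomial s_(d+1) takes values in every
  ideal of codimension at most d: A would satisfy a polynomial identity.

  Applied to the finitely many maps a_j0 |-> a_i, this gives a nonzero ideal J' of A on which
  they are scalars c_i. For x in J' the ideal I then contains x (x) nu with
  nu = mu_j0 + sum_i c_i mu_i, which is nonzero by the independence of the mu_i. Hence I
  contains the image of J', which has finite codimension because A is just infinite.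
*)
theory Submission
  imports Defs "HOL-Combinatorics.Permutations"
begin

section \<open>Linear algebra\<close>

context vector_space
begin

lemma nontrivial_relation_in_span:
  assumes G: "finite G" "card G \<le> n" and b: "\<And>i. i \<le> n \<Longrightarrow> b i \<in> span G"
  shows "\<exists>\<gamma>. (\<Sum>i\<le>n. \<gamma> i *s b i) = 0 \<and> (\<exists>i\<le>n. \<gamma> i \<noteq> 0)"
proof (cases "inj_on b {..n}")
  case False
  then obtain i j where ij: "i \<le> n" "j \<le> n" "i \<noteq> j" "b i = b j"
    unfolding inj_on_def by auto
  define \<gamma> where "\<gamma> k = (if k = i then 1 else if k = j then -1 else (0::'a))" for k
  have "\<gamma> k *s b k = (if k = i then b k else 0) - (if k = j then b k else 0)" for k
    using ij by (auto simp: \<gamma>_def)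
  then have "(\<Sum>k\<le>n. \<gamma> k *s b k) =
      (\<Sum>k\<le>n. if k = i then b k else 0) - (\<Sum>k\<le>n. if k = j then b k else 0)"
    by (simp add: sum_subtractf)
  also have "\<dots> = 0" using ij by simp
  finally show ?thesis using ij by (intro exI[of _ \<gamma>]) (auto simp: \<gamma>_def)
next
  case True
  have "\<not> independent (b ` {..n})"
  proof
    assume "independent (b ` {..n})"
    then have "card (b ` {..n}) \<le> card G"
      using independent_span_bound[OF G(1)] b by auto
    with True G(2) show False by (simp add: card_image)
  qed
  then obtain u where u: "\<exists>v\<in>b ` {..n}. u v \<noteq> 0" "(\<Sum>v\<in>b ` {..n}. u v *s v) = 0"
    by (auto simp: dependent_finite)
  then have "(\<Sum>i\<le>n. u (b i) *s b i) = 0" by (simp add: sum.reindex[OF True])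
  with u(1) show ?thesis by (intro exI[of _ "\<lambda>i. u (b i)"]) auto
qed

lemma in_span_finite_subset:
  assumes "x \<in> span S"
  obtains T where "finite T" "T \<subseteq> S" "x \<in> span T"
proof -
  from assms obtain T r where "finite T" "T \<subseteq> S" "x = (\<Sum>a\<in>T. r a *s a)"
    unfolding span_explicit by auto
  with that show ?thesis by (auto intro: span_sum span_scale span_base)
qed

lemma countable_independent_in_span:
  assumes "countable M" "independent B" "B \<subseteq> span M"
  shows "countable B"
proof (rule countable_subset)
  show "B \<subseteq> (\<Union>T\<in>{T. finite T \<and> T \<subseteq> M}. B \<inter> span T)"
  proof
    fix b assume "b \<in> B"
    then obtain T where "finite T" "T \<subseteq> M" "b \<in> span T"
      using assms(3) in_span_finite_subset by blast
    with \<open>b \<in> B\<close> show "b \<in> (\<Union>T\<in>{T. finite T \<and> T \<subseteq> M}. B \<inter> span T)" by blast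
  qed
  have "finite (B \<inter> span T)" if "finite T" for T
  proof -
    have "independent (B \<inter> span T)" using independent_mono[OF assms(2)] by blast
    then show ?thesis using independent_span_bound[OF that] by blast
  qed
  then show "countable (\<Union>T\<in>{T. finite T \<and> T \<subseteq> M}. B \<inter> span T)"
    using countable_Collect_finite_subset[OF assms(1)] by (intro countable_UN) (auto intro: countable_finite)
qed

lemma independent_of_any_card:
  assumes "\<And>F. finite F \<Longrightarrow> span F \<noteq> UNIV"
  obtains B where "independent B" "finite B" "card B = n"
proof -
  have "\<exists>B. independent B \<and> finite B \<and> card B = n"
  proof (induction n)
    case 0
    show ?case by (intro exI[of _ "{}"]) (simp add: independent_empty)
  next
    case (Suc n)
    then obtain B where B: "independent B" "finite B" "card B = n" by blast
    then obtain a where a: "a \<notin> span B" using assms by blast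
    then have "a \<notin> B" using span_base by blast
    with B a show ?case by (intro exI[of _ "insert a B"]) (simp add: independent_insertI)
  qed
  with that show ?thesis by blast
qed

end

locale invariant_subspace = vector_space scale
  for scale :: "'k::field \<Rightarrow> 'a::ab_group_add \<Rightarrow> 'a" (infixr \<open>*s\<close> 75) +
  fixes W :: "'a set" and g :: "'a \<Rightarrow> 'a"
  assumes subspace: "subspace W"
    and maps_into: "v \<in> W \<Longrightarrow> g v \<in> W"
    and additive: "v \<in> W \<Longrightarrow> w \<in> W \<Longrightarrow> g (v + w) = g v + g w"
    and homogeneous: "v \<in> W \<Longrightarrow> g (c *s v) = c *s g v"
begin

definition poly_apply :: "nat \<Rightarrow> 'k poly \<Rightarrow> 'a \<Rightarrow> 'a" where
  "poly_apply N p u = (\<Sum>i\<le>N. coeff p i *s (g ^^ i) u)"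

lemma map_0: "g 0 = 0"
  using additive[of 0 0] subspace_0[OF subspace] by simp

lemma map_sum: "(\<And>i. i \<in> I \<Longrightarrow> h i \<in> W) \<Longrightarrow> g (sum h I) = (\<Sum>i\<in>I. g (h i))"
  by (induction I rule: infinite_finite_induct)
     (simp_all add: map_0 additive subspace_sum[OF subspace])

lemma funpow_mem: "u \<in> W \<Longrightarrow> (g ^^ i) u \<in> W"
  by (induction i) (auto intro: maps_into)

lemma poly_apply_mem: "u \<in> W \<Longrightarrow> poly_apply N p u \<in> W"
  unfolding poly_apply_def
  by (intro subspace_sum[OF subspace] subspace_scale[OF subspace] funpow_mem)

lemma poly_apply_const_nonzero:
  assumes "p \<noteq> 0" "degree p = 0" "u \<noteq> 0"
  shows "poly_apply N p u \<noteq> 0"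
proof -
  have "poly_apply N p u = coeff p 0 *s u"
    unfolding poly_apply_def using assms(2)
    by (subst sum.mono_neutral_right[of _ "{0}"]) (auto simp: coeff_eq_0)
  moreover have "coeff p 0 \<noteq> 0" using assms(1,2) leading_coeff_0_iff by fastforce
  ultimately show ?thesis using assms(3) by simp
qed

lemma poly_apply_linear_factor:
  assumes "poly p r = 0" "degree p \<le> Suc N" "u \<in> W"
  defines "w \<equiv> poly_apply N (synthetic_div p r) u"
  shows "poly_apply (Suc N) p u = g w - r *s w"
proof -
  let ?q = "synthetic_div p r"
  have coeff_p: "coeff p i = coeff (pCons 0 ?q) i - r * coeff ?q i" for i
    using arg_cong[OF synthetic_div_correct[of p r], of "\<lambda>x. coeff x i"] assms(1)
    by (simp add: algebra_simps)
  have "coeff ?q (Suc N) = 0"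
    using assms(2) degree_synthetic_div[of p r] by (intro coeff_eq_0) linarith
  then have q_sum: "(\<Sum>i\<le>Suc N. coeff ?q i *s (g ^^ i) u) = w"
    by (simp add: w_def poly_apply_def)
  have "(\<Sum>i\<le>Suc N. coeff (pCons 0 ?q) i *s (g ^^ i) u) = (\<Sum>i\<le>N. g (coeff ?q i *s (g ^^ i) u))"
    unfolding sum.atMost_Suc_shift using assms(3) by (simp add: homogeneous funpow_mem)
  also have "\<dots> = g w"
    unfolding w_def poly_apply_def using assms(3)
    by (intro map_sum[symmetric] subspace_scale[OF subspace] funpow_mem)
  finally have shift_sum: "(\<Sum>i\<le>Suc N. coeff (pCons 0 ?q) i *s (g ^^ i) u) = g w" .
  have "poly_apply (Suc N) p u =
      (\<Sum>i\<le>Suc N. coeff (pCons 0 ?q) i *s (g ^^ i) u) - r *s (\<Sum>i\<le>Suc N. coeff ?q i *s (g ^^ i) u)"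
    unfolding poly_apply_def coeff_p
    by (simp only: scale_left_diff_distrib sum_subtractf scale_sum_right scale_scale)
  then show ?thesis by (simp only: shift_sum q_sum)
qed

end

lemma eigenvector_if_annihilated:
  fixes scale :: "'k::alg_closed_field \<Rightarrow> 'a::ab_group_add \<Rightarrow> 'a"
  assumes "invariant_subspace scale W g"
    and "p \<noteq> 0" "degree p \<le> N" "u \<in> W" "u \<noteq> 0"
    and "invariant_subspace.poly_apply scale g N p u = 0"
  shows "\<exists>w r. w \<in> W \<and> w \<noteq> 0 \<and> g w = scale r w"
proof -
  interpret invariant_subspace scale W g by fact
  show ?thesis
    using assms(2-)
  proof (induction N arbitrary: p u)
    case 0
    then show ?case using poly_apply_const_nonzero by blast
  next
    case (Suc N)
    then have "degree p \<noteq> 0" using poly_apply_const_nonzero by blast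
    then obtain r where r: "poly p r = 0" using alg_closed_imp_poly_has_root by blast
    let ?q = "synthetic_div p r"
    have "g (poly_apply N ?q u) = scale r (poly_apply N ?q u)"
      using poly_apply_linear_factor[OF r Suc.prems(2,3)] Suc.prems(5) by simp
    moreover have "?q \<noteq> 0" "degree ?q \<le> N"
      using synthetic_div_correct'[of r p] r Suc.prems(1,2) \<open>degree p \<noteq> 0\<close>
      by (auto simp: degree_synthetic_div)
    ultimately show ?case
      using Suc.IH Suc.prems(3,4) poly_apply_mem[OF Suc.prems(3)] by blast
  qed
qed

lemma eigenvector_exists:
  fixes scale :: "'k::alg_closed_field \<Rightarrow> 'a::ab_group_add \<Rightarrow> 'a"
  assumes "invariant_subspace scale W g" "W = module.span scale G" "finite G"
    and "v \<in> W" "v \<noteq> 0"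
  shows "\<exists>w r. w \<in> W \<and> w \<noteq> 0 \<and> g w = scale r w"
proof -
  interpret invariant_subspace scale W g by fact
  obtain \<gamma> where \<gamma>: "(\<Sum>i\<le>card G. scale (\<gamma> i) ((g ^^ i) v)) = 0" "\<exists>i\<le>card G. \<gamma> i \<noteq> 0"
    using nontrivial_relation_in_span[OF assms(3) le_refl, of "\<lambda>i. (g ^^ i) v"]
      funpow_mem assms(2,4) by auto
  define p where "p = (\<Sum>i\<le>card G. monom (\<gamma> i) i)"
  have coeff_p: "i \<le> card G \<Longrightarrow> coeff p i = \<gamma> i" for i
    unfolding p_def by (rule coeff_sum_monom)
  have "p \<noteq> 0" using \<gamma>(2) coeff_p by force
  moreover have "degree p \<le> card G"
    unfolding p_def by (intro degree_le) (auto simp: coeff_sum)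
  moreover have "poly_apply (card G) p v = 0"
    unfolding poly_apply_def using coeff_p \<gamma>(1) by simp
  ultimately show ?thesis
    using eigenvector_if_annihilated[OF assms(1)] assms(4,5) by blast
qed

section \<open>Ideals and the standard polynomial\<close>

lemma two_sided_ideal_0: "two_sided_ideal I \<Longrightarrow> 0 \<in> I"
  and two_sided_ideal_add: "two_sided_ideal I \<Longrightarrow> x \<in> I \<Longrightarrow> y \<in> I \<Longrightarrow> x + y \<in> I"
  and two_sided_ideal_uminus: "two_sided_ideal I \<Longrightarrow> x \<in> I \<Longrightarrow> - x \<in> I"
  and two_sided_ideal_mult_left: "two_sided_ideal I \<Longrightarrow> x \<in> I \<Longrightarrow> a * x \<in> I"
  and two_sided_ideal_mult_right: "two_sided_ideal I \<Longrightarrow> x \<in> I \<Longrightarrow> x * a \<in> I"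
  unfolding two_sided_ideal_def by blast+

lemma two_sided_ideal_diff: "two_sided_ideal I \<Longrightarrow> x \<in> I \<Longrightarrow> y \<in> I \<Longrightarrow> x - y \<in> I"
  using two_sided_ideal_add two_sided_ideal_uminus by fastforce

lemma two_sided_ideal_sum: "two_sided_ideal I \<Longrightarrow> (\<And>i. i \<in> A \<Longrightarrow> h i \<in> I) \<Longrightarrow> sum h A \<in> I"
  by (induction A rule: infinite_finite_induct) (auto intro: two_sided_ideal_0 two_sided_ideal_add)

locale field_algebra = vector_space scale
  for scale :: "'k::field \<Rightarrow> 'a::ring_1 \<Rightarrow> 'a" (infixr \<open>*s\<close> 75) +
  assumes scale_mult_left: "c *s (x * y) = (c *s x) * y"
    and scale_mult_right: "c *s (x * y) = x * (c *s y)"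
begin

lemma scale_eq_mult: "c *s x = (c *s 1) * x"
  using scale_mult_left[of c 1 x] by simp

lemma two_sided_ideal_scale: "two_sided_ideal I \<Longrightarrow> x \<in> I \<Longrightarrow> c *s x \<in> I"
  by (subst scale_eq_mult) (rule two_sided_ideal_mult_left)

lemma subspace_two_sided_ideal: "two_sided_ideal I \<Longrightarrow> subspace I"
  unfolding subspace_def
  by (auto intro: two_sided_ideal_0 two_sided_ideal_add two_sided_ideal_scale)

lemma countable_spanning_set:
  assumes "countably_generated scale"
  obtains M where "countable M" "span M = UNIV"
proof -
  obtain S where S: "countable S" "subalg_gen scale S = UNIV"
    using assms unfolding countably_generated_def by blast
  define M where "M = prod_list ` lists S"
  have mult_M: "m * m' \<in> M" if "m \<in> M" "m' \<in> M" for m m'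
  proof -
    from that obtain ws ws' where "ws \<in> lists S" "ws' \<in> lists S" "m = prod_list ws" "m' = prod_list ws'"
      unfolding M_def by blast
    then show ?thesis unfolding M_def by (intro image_eqI[of _ _ "ws @ ws'"]) auto
  qed
  have mult_left: "m * y \<in> span M" if "m \<in> M" "y \<in> span M" for m y
    using that(2)
    by (induction rule: span_induct)
       (auto simp: subspace_def distrib_left scale_mult_right[symmetric]
             intro: span_base mult_M[OF that(1)] span_add span_scale span_zero)
  have mult: "x * y \<in> span M" if "x \<in> span M" "y \<in> span M" for x y
    using that(1)
    by (induction rule: span_induct)
       (auto simp: subspace_def distrib_right scale_mult_left[symmetric]
             intro: mult_left[OF _ that(2)] span_add span_scale span_zero)
  have "prod_list [] \<in> M" "\<And>s. s \<in> S \<Longrightarrow> prod_list [s] \<in> M"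
    unfolding M_def by (intro imageI; simp)+
  then have "1 \<in> span M" "S \<subseteq> span M" by (auto intro: span_base)
  then have "subalg_gen scale S \<subseteq> span M"
    unfolding subalg_gen_def by (intro Inter_lower) (auto intro: mult span_add span_scale)
  moreover have "countable M" unfolding M_def using S(1) by simp
  ultimately show ?thesis using S(2) that by blast
qed

end

lemma is_algebra_iff_field_algebra: "is_algebra scale \<longleftrightarrow> field_algebra scale"
  unfolding is_algebra_def field_algebra_def field_algebra_axioms_def by blast

lemma sum_permutes_eq_0_if_antisymmetric:
  fixes f :: "('a \<Rightarrow> 'a) \<Rightarrow> 'b::ab_group_add"
  assumes S: "finite S" "i \<in> S" "j \<in> S" "i \<noteq> j"
    and antisym: "\<And>\<sigma>. \<sigma> permutes S \<Longrightarrow> f (transpose i j \<circ> \<sigma>) = - f \<sigma>"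
  shows "(\<Sum>\<sigma> | \<sigma> permutes S. f \<sigma>) = 0"
proof -
  \<comment> \<open>Pair each even permutation with its odd translate; the cruder \<open>f \<sigma> = - f \<sigma>\<close> argument
    would fail in characteristic 2.\<close>
  let ?\<tau> = "transpose i j"
  define E where "E = {\<sigma>. \<sigma> permutes S \<and> evenperm \<sigma>}"
  have \<tau>: "?\<tau> permutes S" "permutation ?\<tau>" "\<not> evenperm ?\<tau>"
    using S by (auto simp: permutes_swap_id evenperm_swap intro: permutes_imp_permutation)
  have parity: "evenperm (?\<tau> \<circ> \<sigma>) \<longleftrightarrow> \<not> evenperm \<sigma>" if "\<sigma> permutes S" for \<sigma>
    using evenperm_comp[OF \<tau>(2) permutes_imp_permutation[OF S(1) that]] \<tau>(3) by blast
  have involution: "?\<tau> \<circ> (?\<tau> \<circ> \<sigma>) = \<sigma>" for \<sigma> :: "'a \<Rightarrow> 'a"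
    by (simp flip: comp_assoc)
  have odd: "{\<sigma>. \<sigma> permutes S \<and> \<not> evenperm \<sigma>} = (\<circ>) ?\<tau> ` E"
  proof (intro equalityI subsetI)
    fix \<sigma> assume "\<sigma> \<in> {\<sigma>. \<sigma> permutes S \<and> \<not> evenperm \<sigma>}"
    then have "?\<tau> \<circ> \<sigma> \<in> E" unfolding E_def using parity permutes_compose[OF _ \<tau>(1)] by auto
    then show "\<sigma> \<in> (\<circ>) ?\<tau> ` E" using involution by (metis image_eqI)
  qed (auto simp: E_def parity permutes_compose[OF _ \<tau>(1)])
  have inj: "inj_on ((\<circ>) ?\<tau>) E"
    by (metis involution inj_onI)
  have "{\<sigma>. \<sigma> permutes S} = E \<union> (\<circ>) ?\<tau> ` E" "E \<inter> (\<circ>) ?\<tau> ` E = {}"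
    using odd unfolding E_def by blast+
  moreover have "finite {\<sigma>. \<sigma> permutes S}" using S(1) by (rule finite_permutations)
  ultimately have "(\<Sum>\<sigma> | \<sigma> permutes S. f \<sigma>) = sum f E + sum f ((\<circ>) ?\<tau> ` E)"
    by (simp add: sum.union_disjoint)
  also have "sum f ((\<circ>) ?\<tau> ` E) = (\<Sum>\<sigma>\<in>E. - f \<sigma>)"
    unfolding sum.reindex[OF inj] by (rule sum.cong) (auto simp: E_def antisym)
  finally show ?thesis by (simp add: sum_negf)
qed

definition standard_poly :: "nat \<Rightarrow> (nat \<Rightarrow> 'a::ring_1) \<Rightarrow> 'a" where
  "standard_poly m x = (\<Sum>\<sigma> | \<sigma> permutes {..<m}. of_int (sign \<sigma>) * prod_list (map (x \<circ> \<sigma>) [0..<m]))"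

lemma standard_poly_eq_0_if_eq:
  assumes "i < m" "j < m" "i \<noteq> j" "x i = x j"
  shows "standard_poly m (x :: nat \<Rightarrow> 'a::ring_1) = 0"
  unfolding standard_poly_def
proof (rule sum_permutes_eq_0_if_antisymmetric)
  fix \<sigma> :: "nat \<Rightarrow> nat" assume \<sigma>: "\<sigma> permutes {..<m}"
  have "sign (transpose i j \<circ> \<sigma>) = - sign \<sigma>"
    using assms(3) sign_compose[OF _ permutes_imp_permutation[OF _ \<sigma>], of "transpose i j"]
    by (simp add: sign_swap_id permutation_swap_id)
  moreover have "x \<circ> (transpose i j \<circ> \<sigma>) = x \<circ> \<sigma>"
    using assms(4) by (auto simp: fun_eq_iff transpose_def)
  ultimately show "of_int (sign (transpose i j \<circ> \<sigma>)) * prod_list (map (x \<circ> (transpose i j \<circ> \<sigma>)) [0..<m]) =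
      - (of_int (sign \<sigma>) * prod_list (map (x \<circ> \<sigma>) [0..<m]) :: 'a)"
    by simp
qed (use assms in auto)

lemma prod_list_map_fun_upd:
  assumes "distinct xs" "j \<in> set xs"
  obtains l r where "\<And>u. prod_list (map (x(j := u)) xs) = l * u * r"
proof -
  obtain ys zs where xs: "xs = ys @ j # zs" using split_list[OF assms(2)] by blast
  with assms(1) have "j \<notin> set ys" "j \<notin> set zs" by auto
  then have ys: "map (x(j := u)) ys = map x ys" and zs: "map (x(j := u)) zs = map x zs" for u
    by (auto intro: map_cong)
  show ?thesis
    by (rule that[of "prod_list (map x ys)" "prod_list (map x zs)"])
       (simp only: xs ys zs map_append list.map prod_list.append prod_list.Cons fun_upd_same mult.assoc)
qed

lemma standard_poly_fun_upd:
  assumes "j < m"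
  obtains l r where "\<And>u. standard_poly m (x(j := u)) = (\<Sum>\<sigma> | \<sigma> permutes {..<m}. l \<sigma> * u * r \<sigma>)"
proof -
  have "\<exists>l r. \<forall>u. of_int (sign \<sigma>) * prod_list (map (x(j := u) \<circ> \<sigma>) [0..<m]) = l * u * r"
    if "\<sigma> permutes {..<m}" for \<sigma>
  proof -
    have "distinct (map \<sigma> [0..<m])" "j \<in> set (map \<sigma> [0..<m])"
      using permutes_inj_on[OF that] permutes_image[OF that] assms
      by (auto simp: distinct_map inj_on_subset lessThan_atLeast0)
    then obtain l r where "\<And>u. prod_list (map (x(j := u)) (map \<sigma> [0..<m])) = l * u * r"
      using prod_list_map_fun_upd[where x = x] by blast
    then show ?thesis by (intro exI[of _ "of_int (sign \<sigma>) * l"] exI[of _ r]) (simp add: mult.assoc)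
  qed
  then obtain l r where "\<And>\<sigma> u. \<sigma> permutes {..<m} \<Longrightarrow>
      of_int (sign \<sigma>) * prod_list (map (x(j := u) \<circ> \<sigma>) [0..<m]) = l \<sigma> * u * r \<sigma>"
    by metis
  then show ?thesis using that[of l r] unfolding standard_poly_def by simp
qed

lemma standard_poly_fun_upd_in_ideal:
  assumes "j < m" "two_sided_ideal I" "u \<in> I"
  shows "standard_poly m (x(j := u)) \<in> I"
proof -
  obtain l r where "\<And>u. standard_poly m (x(j := u)) = (\<Sum>\<sigma> | \<sigma> permutes {..<m}. l \<sigma> * u * r \<sigma>)"
    using standard_poly_fun_upd[OF assms(1)] by blast
  then show ?thesis
    using assms(2,3)
    by (simp add: two_sided_ideal_sum two_sided_ideal_mult_left two_sided_ideal_mult_right)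
qed

context field_algebra
begin

lemma linear_standard_poly_fun_upd:
  assumes "j < m"
  shows "Vector_Spaces.linear scale scale (\<lambda>u. standard_poly m (x(j := u)))"
proof -
  obtain l r where lr: "\<And>u. standard_poly m (x(j := u)) = (\<Sum>\<sigma> | \<sigma> permutes {..<m}. l \<sigma> * u * r \<sigma>)"
    using standard_poly_fun_upd[OF assms] by blast
  have "c *s (l' * u * r') = l' * (c *s u) * r'" for c l' u r'
    using scale_mult_left[of c "l' * u" r'] scale_mult_right[of c l' u] by simp
  then show ?thesis
    unfolding Vector_Spaces.linear_iff lr
    by (simp add: vector_space_axioms distrib_left distrib_right sum.distrib scale_sum_right)
qed

lemma relation_mod_finite_codim:
  assumes L: "subspace L" and F: "finite F" "card F \<le> d"
    and codim: "\<And>a. \<exists>b\<in>span F. a - b \<in> L"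
  obtains j c where "j \<le> d" "x j - (\<Sum>i\<in>{..d} - {j}. c i *s x i) \<in> L"
proof -
  have "\<forall>i. \<exists>b. b \<in> span F \<and> x i - b \<in> L" using codim by blast
  then obtain b where b: "\<And>i. b i \<in> span F" "\<And>i. x i - b i \<in> L"
    by metis
  obtain \<gamma> j where \<gamma>: "(\<Sum>i\<le>d. \<gamma> i *s b i) = 0" "j \<le> d" "\<gamma> j \<noteq> 0"
    using nontrivial_relation_in_span[OF F] b(1) by blast
  have "(\<Sum>i\<le>d. \<gamma> i *s x i) = (\<Sum>i\<le>d. \<gamma> i *s (x i - b i))"
    using \<gamma>(1) by (simp add: scale_right_diff_distrib sum_subtractf)
  also have "\<dots> \<in> L"
    using L b(2) by (intro subspace_sum subspace_scale)
  finally have "inverse (\<gamma> j) *s (\<Sum>i\<le>d. \<gamma> i *s x i) \<in> L"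
    by (rule subspace_scale[OF L])
  moreover have "j \<in> {..d}" using \<gamma>(2) by simp
  ultimately have "x j + (\<Sum>i\<in>{..d} - {j}. (inverse (\<gamma> j) * \<gamma> i) *s x i) \<in> L"
    using \<gamma>(3) by (simp add: scale_sum_right sum.remove)
  then show ?thesis
    using that[OF \<gamma>(2), of "\<lambda>i. - (inverse (\<gamma> j) * \<gamma> i)"]
    by (simp add: sum_negf)
qed

lemma standard_poly_in_ideal_of_finite_codim:
  assumes L: "two_sided_ideal L" and F: "finite F" "card F \<le> d"
    and codim: "\<And>a. \<exists>b\<in>span F. a - b \<in> L"
  shows "standard_poly (Suc d) x \<in> L"
proof -
  obtain j c where j: "j \<le> d" and l: "x j - (\<Sum>i\<in>{..d} - {j}. c i *s x i) \<in> L"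
    using relation_mod_finite_codim[OF subspace_two_sided_ideal[OF L] F codim] by blast
  define S where "S u = standard_poly (Suc d) (x(j := u))" for u
  interpret S: Vector_Spaces.linear scale scale S
    unfolding S_def using j by (intro linear_standard_poly_fun_upd) simp
  have "S (x i) = 0" if "i \<in> {..d} - {j}" for i
    unfolding S_def using that j by (intro standard_poly_eq_0_if_eq[of i _ j]) auto
  then have "S (\<Sum>i\<in>{..d} - {j}. c i *s x i) = 0"
    by (simp add: S.sum S.scale)
  then have "S (x j - (\<Sum>i\<in>{..d} - {j}. c i *s x i)) = S (x j)"
    by (simp add: S.diff)
  then have "standard_poly (Suc d) x = S (x j - (\<Sum>i\<in>{..d} - {j}. c i *s x i))"
    by (simp add: S_def)
  also have "\<dots> \<in> L"
    unfolding S_def using j by (intro standard_poly_fun_upd_in_ideal L l) simp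
  finally show ?thesis .
qed

end

lemma standard_identity_imp_satisfies_PI:
  fixes scale :: "'k::field \<Rightarrow> 'a::ring_1 \<Rightarrow> 'a"
  assumes "vector_space scale" and identity: "\<And>x :: nat \<Rightarrow> 'a. standard_poly m x = 0"
  shows "satisfies_PI scale"
proof -
  interpret vector_space scale by fact
  define P where "P = {\<sigma>. \<sigma> permutes {..<m}}"
  define word where "word \<sigma> = map \<sigma> [0..<m]" for \<sigma> :: "nat \<Rightarrow> nat"
  \<comment> \<open>The coefficients of \<open>s\<^sub>m\<close>: the word \<open>\<sigma> 0 \<dots> \<sigma> (m - 1)\<close> has coefficient \<open>sign \<sigma>\<close>.\<close>
  define f where "f w = (if w \<in> word ` P then of_int (sign (inv_into P word w)) else (0::'k))" for w
  have inj: "inj_on word P"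
  proof (rule inj_onI, rule ext)
    fix \<sigma> \<tau> i assume "\<sigma> \<in> P" "\<tau> \<in> P" "word \<sigma> = word \<tau>"
    then show "\<sigma> i = \<tau> i"
      unfolding P_def word_def by (cases "i < m") (auto simp: permutes_not_in)
  qed
  have f_word: "f (word \<sigma>) = of_int (sign \<sigma>)" if "\<sigma> \<in> P" for \<sigma> :: "nat \<Rightarrow> nat"
    using that inj by (simp add: f_def)
  have support: "{w. f w \<noteq> 0} = word ` P"
    by (auto simp: f_def sign_def)
  have scale_sign: "scale (of_int (sign \<sigma>)) y = of_int (sign \<sigma>) * y" for \<sigma> :: "nat \<Rightarrow> nat" and y
    by (simp add: sign_def)
  have "ncpoly_eval scale f x = 0" for x
  proof -
    have "ncpoly_eval scale f x = (\<Sum>\<sigma>\<in>P. scale (f (word \<sigma>)) (prod_list (map x (word \<sigma>))))"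
      unfolding ncpoly_eval_def support by (rule sum.reindex[OF inj, unfolded comp_def])
    also have "\<dots> = standard_poly m x"
      unfolding standard_poly_def P_def[symmetric]
      by (rule sum.cong) (simp_all add: f_word[unfolded word_def] scale_sign word_def)
    finally show ?thesis using identity by simp
  qed
  moreover have "id \<in> P" "finite P" unfolding P_def by (simp_all add: finite_permutations)
  ultimately show ?thesis
    unfolding satisfies_PI_def by (intro exI[of _ f]) (auto simp: support)
qed

section \<open>Bimodule maps from ideals\<close>

definition bimodule_map :: "'a::ring_1 set \<Rightarrow> ('a \<Rightarrow> 'a) \<Rightarrow> bool" where
  "bimodule_map J f \<longleftrightarrow> (\<forall>x\<in>J. \<forall>y\<in>J. f (x + y) = f x + f y) \<and>
     (\<forall>x\<in>J. \<forall>a. f (a * x) = a * f x \<and> f (x * a) = f x * a)"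

lemma bimodule_map_subset: "bimodule_map J f \<Longrightarrow> J' \<subseteq> J \<Longrightarrow> bimodule_map J' f"
  unfolding bimodule_map_def by blast

text \<open>For a prime algebra this says that its extended centroid is the ground field.\<close>

definition bimodule_maps_locally_scalar :: "('k::field \<Rightarrow> 'a::ring_1 \<Rightarrow> 'a) \<Rightarrow> bool" where
  "bimodule_maps_locally_scalar scale \<longleftrightarrow>
     (\<forall>J f. two_sided_ideal J \<and> J \<noteq> {0} \<and> bimodule_map J f \<longrightarrow>
       (\<exists>c J'. two_sided_ideal J' \<and> J' \<noteq> {0} \<and> J' \<subseteq> J \<and> (\<forall>x\<in>J'. f x = scale c x)))"

lemma bimodule_maps_locally_scalar_family:
  assumes "bimodule_maps_locally_scalar scale" and "finite Ix"
  shows "two_sided_ideal J \<Longrightarrow> J \<noteq> {0} \<Longrightarrow> (\<And>i. i \<in> Ix \<Longrightarrow> bimodule_map J (f i)) \<Longrightarrow>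
    \<exists>c J'. two_sided_ideal J' \<and> J' \<noteq> {0} \<and> J' \<subseteq> J \<and> (\<forall>i\<in>Ix. \<forall>x\<in>J'. f i x = scale (c i) x)"
  using assms(2)
proof (induction Ix arbitrary: J rule: finite_induct)
  case (insert i Ix)
  then obtain c J1 where J1: "two_sided_ideal J1" "J1 \<noteq> {0}" "J1 \<subseteq> J"
    "\<forall>i\<in>Ix. \<forall>x\<in>J1. f i x = scale (c i) x"
    by blast
  moreover obtain c0 J2 where "two_sided_ideal J2" "J2 \<noteq> {0}" "J2 \<subseteq> J1" "\<forall>x\<in>J2. f i x = scale c0 x"
    using assms(1) J1 bimodule_map_subset[OF insert.prems(3)[of i] J1(3)]
    unfolding bimodule_maps_locally_scalar_def by blast
  ultimately show ?case
    by (intro exI[of _ "c(i := c0)"] exI[of _ J2]) auto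
qed blast

locale ideal_bimodule_map = field_algebra scale
  for scale :: "'k::field \<Rightarrow> 'a::ring_1 \<Rightarrow> 'a" (infixr \<open>*s\<close> 75) +
  fixes J :: "'a set" and f :: "'a \<Rightarrow> 'a"
  assumes ideal: "two_sided_ideal J" and bimodule: "bimodule_map J f"
begin

lemma map_add: "x \<in> J \<Longrightarrow> y \<in> J \<Longrightarrow> f (x + y) = f x + f y"
  and map_mult_left: "x \<in> J \<Longrightarrow> f (a * x) = a * f x"
  and map_mult_right: "x \<in> J \<Longrightarrow> f (x * a) = f x * a"
  using bimodule unfolding bimodule_map_def by blast+

lemma map_0: "f 0 = 0"
  using map_add[of 0 0] two_sided_ideal_0[OF ideal] by simp

lemma map_uminus: "x \<in> J \<Longrightarrow> f (- x) = - f x"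
  using map_add[of x "- x"] two_sided_ideal_uminus[OF ideal] by (simp add: map_0 add_eq_0_iff)

lemma map_scale: "x \<in> J \<Longrightarrow> f (c *s x) = c *s f x"
  by (subst (1 2) scale_eq_mult) (rule map_mult_left)

lemma map_sum: "(\<And>i. i \<in> A \<Longrightarrow> h i \<in> J) \<Longrightarrow> f (sum h A) = (\<Sum>i\<in>A. f (h i))"
  by (induction A rule: infinite_finite_induct)
     (auto simp: map_0 map_add two_sided_ideal_sum[OF ideal])

lemma eigenspace_ideal: "two_sided_ideal {y \<in> J. f y = c *s y}"
  unfolding two_sided_ideal_def
proof (intro conjI ballI allI)
  fix x y a assume x: "x \<in> {y \<in> J. f y = c *s y}" and y: "y \<in> {y \<in> J. f y = c *s y}"
  then show "x + y \<in> {y \<in> J. f y = c *s y}"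
    by (simp add: map_add scale_right_distrib two_sided_ideal_add[OF ideal])
  show "- x \<in> {y \<in> J. f y = c *s y}"
    using x by (simp add: map_uminus two_sided_ideal_uminus[OF ideal])
  show "a * x \<in> {y \<in> J. f y = c *s y}"
    using x by (simp add: map_mult_left scale_mult_right two_sided_ideal_mult_left[OF ideal])
  show "x * a \<in> {y \<in> J. f y = c *s y}"
    using x by (simp add: map_mult_right scale_mult_left two_sided_ideal_mult_right[OF ideal])
qed (simp add: map_0 two_sided_ideal_0[OF ideal])

lemma shifted_image_ideal: "two_sided_ideal ((\<lambda>y. f y - c *s y) ` J)"
  unfolding two_sided_ideal_def
proof (intro conjI ballI allI)
  show "0 \<in> (\<lambda>y. f y - c *s y) ` J"
    using two_sided_ideal_0[OF ideal] by (force simp: map_0)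
next
  fix u v assume "u \<in> (\<lambda>y. f y - c *s y) ` J" "v \<in> (\<lambda>y. f y - c *s y) ` J"
  then obtain x y where "x \<in> J" "y \<in> J" "u = f x - c *s x" "v = f y - c *s y" by blast
  then show "u + v \<in> (\<lambda>y. f y - c *s y) ` J"
    by (intro image_eqI[of _ _ "x + y"]) (simp_all add: map_add scale_right_distrib two_sided_ideal_add[OF ideal])
next
  fix u a assume "u \<in> (\<lambda>y. f y - c *s y) ` J"
  then obtain x where x: "x \<in> J" "u = f x - c *s x" by blast
  show "- u \<in> (\<lambda>y. f y - c *s y) ` J"
    using x by (intro image_eqI[of _ _ "- x"]) (simp_all add: map_uminus two_sided_ideal_uminus[OF ideal])
  show "a * u \<in> (\<lambda>y. f y - c *s y) ` J"
    using x by (intro image_eqI[of _ _ "a * x"])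
      (simp_all add: map_mult_left right_diff_distrib scale_mult_right two_sided_ideal_mult_left[OF ideal])
  show "u * a \<in> (\<lambda>y. f y - c *s y) ` J"
    using x by (intro image_eqI[of _ _ "x * a"])
      (simp_all add: map_mult_right left_diff_distrib scale_mult_left two_sided_ideal_mult_right[OF ideal])
qed

lemma invariant_subspace_span:
  assumes "G \<subseteq> J" and invariant: "\<And>v. v \<in> G \<Longrightarrow> f v \<in> span G"
  shows "invariant_subspace scale (span G) f"
proof -
  have span_J: "span G \<subseteq> J"
    using assms(1) subspace_two_sided_ideal[OF ideal] by (rule span_minimal)
  have "v \<in> {v \<in> J. f v \<in> span G}" if "v \<in> span G" for v
    using that
  proof (rule span_subspace_induct)
    show "subspace {v \<in> J. f v \<in> span G}"
      unfolding subspace_def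
      by (auto simp: map_0 map_add map_scale span_zero span_add span_scale
          two_sided_ideal_0[OF ideal] two_sided_ideal_add[OF ideal] two_sided_ideal_scale[OF ideal])
  qed (use invariant assms(1) in auto)
  then show ?thesis
    using span_J by unfold_locales (auto simp: map_add map_scale)
qed

end

lemma uncountable_nat_fibre:
  fixes h :: "'a \<Rightarrow> nat"
  assumes "uncountable A"
  obtains d where "uncountable {c \<in> A. h c = d}"
proof -
  have "A = (\<Union>d. {c \<in> A. h c = d})" by blast
  then have "\<exists>d. uncountable {c \<in> A. h c = d}"
    using assms countable_UN[of UNIV "\<lambda>d. {c \<in> A. h c = d}"] by auto
  with that show ?thesis by blast
qed

lemma (in ideal_bimodule_map) relation_through_map:
  assumes preimage: "\<And>c. c \<in> insert c0 U \<Longrightarrow> y c \<in> J \<and> f (y c) = x + c *s y c"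
    and U: "finite U" "c0 \<notin> U"
    and relation: "(\<Sum>c\<in>insert c0 U. w c *s y c) = 0"
  shows "(\<Sum>c\<in>insert c0 U. w c) *s x + (\<Sum>c\<in>U. (w c * (c - c0)) *s y c) = 0"
proof -
  let ?I = "insert c0 U"
  have "0 = f (\<Sum>c\<in>?I. w c *s y c)" using relation map_0 by simp
  also have "\<dots> = (\<Sum>c\<in>?I. f (w c *s y c))"
    using preimage by (intro map_sum two_sided_ideal_scale[OF ideal]) blast
  also have "\<dots> = (\<Sum>c\<in>?I. w c *s x + (w c * c) *s y c)"
    using preimage by (intro sum.cong) (simp_all add: map_scale scale_right_distrib)
  also have "\<dots> = (\<Sum>c\<in>?I. w c) *s x + (\<Sum>c\<in>?I. (w c * c) *s y c)"
    by (simp add: sum.distrib scale_sum_left)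
  also have "(\<Sum>c\<in>?I. (w c * c) *s y c) =
      (\<Sum>c\<in>?I. (w c * (c - c0)) *s y c) + c0 *s (\<Sum>c\<in>?I. w c *s y c)"
  proof -
    have "w c * (c - c0) + c0 * w c = w c * c" for c by (simp add: algebra_simps)
    then have "(w c * c) *s y c = (w c * (c - c0)) *s y c + c0 *s (w c *s y c)" for c
      by (simp only: scale_scale flip: scale_left_distrib)
    then show ?thesis by (simp add: sum.distrib scale_sum_right)
  qed
  also have "\<dots> = (\<Sum>c\<in>U. (w c * (c - c0)) *s y c)"
    using relation U by simp
  finally show ?thesis by simp
qed

lemma eigenvector_if_in_span_preimages:
  fixes scale :: "'k::alg_closed_field \<Rightarrow> 'a::ring_1 \<Rightarrow> 'a"
  assumes "ideal_bimodule_map scale J f"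
    and "finite U" and preimage: "\<And>c. c \<in> U \<Longrightarrow> y c \<in> J \<and> f (y c) = x + scale c (y c)"
    and "x \<in> module.span scale (y ` U)" "x \<noteq> 0"
  shows "\<exists>w c. w \<in> J \<and> w \<noteq> 0 \<and> f w = scale c w"
proof -
  interpret ideal_bimodule_map scale J f by fact
  have "y ` U \<subseteq> J" using preimage by blast
  moreover have "f v \<in> span (y ` U)" if "v \<in> y ` U" for v
  proof -
    from that obtain c where "c \<in> U" "v = y c" by blast
    then have "f v = x + scale c v" using preimage by blast
    then show ?thesis using span_add[OF assms(4) span_scale[OF span_base[OF that]]] by simp
  qed
  ultimately have "invariant_subspace scale (span (y ` U)) f"
    by (rule invariant_subspace_span)
  then obtain w c where "w \<in> span (y ` U)" "w \<noteq> 0" "f w = scale c w"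
    using eigenvector_exists assms(2,4,5) by (metis finite_imageI)
  moreover have "span (y ` U) \<subseteq> J"
    using \<open>y ` U \<subseteq> J\<close> subspace_two_sided_ideal[OF ideal] by (rule span_minimal)
  ultimately show ?thesis by blast
qed

lemma preimages_finite_independent:
  fixes scale :: "'k::alg_closed_field \<Rightarrow> 'a::ring_1 \<Rightarrow> 'a"
  assumes "ideal_bimodule_map scale J f"
    and no_eigenvector: "\<And>c w. w \<in> J \<Longrightarrow> f w = scale c w \<Longrightarrow> w = 0"
    and "x \<noteq> 0" and preimage: "\<And>c. c \<in> S \<Longrightarrow> y c \<in> J \<and> f (y c) = x + scale c (y c)"
    and "finite U" "U \<subseteq> S" "(\<Sum>c\<in>U. scale (w c) (y c)) = 0"
  shows "\<forall>c\<in>U. w c = 0"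
  using assms(5-7)
proof (induction U arbitrary: w rule: finite_induct)
  case (insert c0 U)
  interpret ideal_bimodule_map scale J f by fact
  let ?I = "insert c0 U" and ?s = "\<Sum>c\<in>insert c0 U. w c"
  have relation: "scale ?s x + (\<Sum>c\<in>U. scale (w c * (c - c0)) (y c)) = 0"
    using insert preimage by (intro relation_through_map) auto
  have "?s = 0"
  proof (rule ccontr)
    assume "?s \<noteq> 0"
    have "- (\<Sum>c\<in>U. scale (w c * (c - c0)) (y c)) \<in> span (y ` ?I)"
      by (intro span_neg span_sum span_scale span_base) auto
    moreover have "scale ?s x = - (\<Sum>c\<in>U. scale (w c * (c - c0)) (y c))"
      using relation by (simp add: eq_neg_iff_add_eq_0)
    ultimately have "scale ?s x \<in> span (y ` ?I)" by simp
    then have "scale (inverse ?s) (scale ?s x) \<in> span (y ` ?I)" by (rule span_scale)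
    then have "x \<in> span (y ` ?I)" using \<open>?s \<noteq> 0\<close> by simp
    moreover have "\<And>c. c \<in> ?I \<Longrightarrow> y c \<in> J \<and> f (y c) = x + scale c (y c)"
      using insert.prems(1) preimage by blast
    moreover have "finite ?I" using insert.hyps(1) by simp
    ultimately obtain w' c where "w' \<in> J" "w' \<noteq> 0" "f w' = scale c w'"
      using eigenvector_if_in_span_preimages[OF assms(1) _ _ _ \<open>x \<noteq> 0\<close>] by blast
    with no_eigenvector show False by blast
  qed
  with relation have "(\<Sum>c\<in>U. scale (w c * (c - c0)) (y c)) = 0" by simp
  moreover have "U \<subseteq> S" using insert.prems(1) by simp
  ultimately have "\<forall>c\<in>U. w c * (c - c0) = 0"
    by (rule insert.IH[rotated])
  then have U_zero: "\<forall>c\<in>U. w c = 0" using insert.hyps(2) by auto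
  then have "scale (w c0) (y c0) = 0" using insert.prems(2) insert.hyps by simp
  moreover have "y c0 \<noteq> 0" using preimage[of c0] insert.prems(1) map_0 \<open>x \<noteq> 0\<close> by auto
  ultimately show ?case using U_zero by simp
qed simp

lemma preimages_independent:
  fixes scale :: "'k::alg_closed_field \<Rightarrow> 'a::ring_1 \<Rightarrow> 'a"
  assumes "ideal_bimodule_map scale J f"
    and no_eigenvector: "\<And>c w. w \<in> J \<Longrightarrow> f w = scale c w \<Longrightarrow> w = 0"
    and "x \<noteq> 0" and preimage: "\<And>c. c \<in> S \<Longrightarrow> y c \<in> J \<and> f (y c) = x + scale c (y c)"
  shows "inj_on y S" "\<not> module.dependent scale (y ` S)"
proof -
  interpret ideal_bimodule_map scale J f by fact
  show inj: "inj_on y S"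
  proof (rule inj_onI)
    fix c c' assume "c \<in> S" "c' \<in> S" "y c = y c'"
    then have "x + scale c (y c) = x + scale c' (y c)"
      using preimage[of c] preimage[of c'] by auto
    then have "scale c (y c) = scale c' (y c)" by simp
    moreover have "y c \<noteq> 0" using preimage[OF \<open>c \<in> S\<close>] map_0 assms(3) by auto
    ultimately show "c = c'" by simp
  qed
  show "\<not> dependent (y ` S)"
  proof
    assume "dependent (y ` S)"
    then obtain T u where T: "finite T" "T \<subseteq> y ` S" "(\<Sum>v\<in>T. scale (u v) v) = 0" "\<exists>v\<in>T. u v \<noteq> 0"
      unfolding dependent_explicit by blast
    then obtain U where U: "U \<subseteq> S" "finite U" "T = y ` U"
      using finite_subset_image[OF T(1,2)] by blast
    then have relation: "(\<Sum>c\<in>U. scale (u (y c)) (y c)) = 0"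
      using T(3) sum.reindex[OF inj_on_subset[OF inj U(1)], of "\<lambda>v. scale (u v) v"] by simp
    have "\<forall>c\<in>U. u (y c) = 0"
      by (rule preimages_finite_independent[OF assms(1)])
        (fact no_eigenvector assms(3) preimage U(2) U(1) relation)+
    with T(4) U(3) show False by blast
  qed
qed

lemma Inter_shifted_images_eq_0:
  fixes scale :: "'k::alg_closed_field \<Rightarrow> 'a::ring_1 \<Rightarrow> 'a"
  assumes "ideal_bimodule_map scale J f"
    and no_eigenvector: "\<And>c w. w \<in> J \<Longrightarrow> f w = scale c w \<Longrightarrow> w = 0"
    and M: "countable M" "module.span scale M = UNIV"
    and "uncountable S" and x: "x \<in> (\<Inter>c\<in>S. (\<lambda>y. f y - scale c y) ` J)"
  shows "x = 0"
proof (rule ccontr)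
  interpret ideal_bimodule_map scale J f by fact
  assume "x \<noteq> 0"
  have "\<exists>y. y \<in> J \<and> f y = x + scale c y" if c: "c \<in> S" for c
  proof -
    obtain y where "y \<in> J" "x = f y - scale c y" using x c by blast
    then show ?thesis by (intro exI[of _ y]) simp
  qed
  then obtain y where y: "\<And>c. c \<in> S \<Longrightarrow> y c \<in> J \<and> f (y c) = x + scale c (y c)"
    using bchoice[of S "\<lambda>c y. y \<in> J \<and> f y = x + scale c y"] by blast
  have "inj_on y S" "\<not> dependent (y ` S)"
    by (rule preimages_independent[OF assms(1)]; fact no_eigenvector \<open>x \<noteq> 0\<close> y)+
  then have "countable (y ` S)"
    using countable_independent_in_span[OF M(1)] M(2) by blast
  then have "countable S" using \<open>inj_on y S\<close> by (rule countable_image_inj_on)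
  with \<open>uncountable S\<close> show False by simp
qed

lemma satisfies_PI_if_no_eigenvector:
  fixes scale :: "'k::alg_closed_field \<Rightarrow> 'a::ring_1 \<Rightarrow> 'a"
  assumes "uncountable (UNIV :: 'k set)" "just_infinite scale"
    and M: "countable M" "module.span scale M = UNIV"
    and "ideal_bimodule_map scale J f" "J \<noteq> {0}"
    and no_eigenvector: "\<And>c w. w \<in> J \<Longrightarrow> f w = scale c w \<Longrightarrow> w = 0"
  shows "satisfies_PI scale"
proof -
  interpret ideal_bimodule_map scale J f by fact
  define L where "L c = (\<lambda>y. f y - scale c y) ` J" for c
  obtain y0 where "y0 \<in> J" "y0 \<noteq> 0" using \<open>J \<noteq> {0}\<close> two_sided_ideal_0[OF ideal] by blast
  have "f y0 - scale c y0 \<noteq> 0" for c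
    using no_eigenvector[OF \<open>y0 \<in> J\<close>, of c] \<open>y0 \<noteq> 0\<close> by auto
  then have "L c \<noteq> {0}" for c
    unfolding L_def using \<open>y0 \<in> J\<close> by blast
  then have "finite_codim scale (L c)" for c
    using assms(2) shifted_image_ideal[of c] unfolding just_infinite_def L_def by blast
  then have "\<forall>c. \<exists>F. finite F \<and> (\<forall>a. \<exists>b\<in>span F. a - b \<in> L c)"
    unfolding finite_codim_def by blast
  then obtain F where F: "\<forall>c. finite (F c) \<and> (\<forall>a. \<exists>b\<in>span (F c). a - b \<in> L c)"
    by (rule choice[THEN exE])
  obtain d where uncountable: "uncountable {c \<in> UNIV. card (F c) = d}"
    by (rule uncountable_nat_fibre[OF assms(1)])
  have "standard_poly (Suc d) x = 0" for x :: "nat \<Rightarrow> 'a"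
  proof (rule Inter_shifted_images_eq_0[OF assms(5)])
    show "standard_poly (Suc d) x \<in> (\<Inter>c\<in>{c \<in> UNIV. card (F c) = d}. (\<lambda>y. f y - scale c y) ` J)"
    proof
      fix c assume "c \<in> {c \<in> UNIV. card (F c) = d}"
      then show "standard_poly (Suc d) x \<in> (\<lambda>y. f y - scale c y) ` J"
        using F unfolding L_def
        by (intro standard_poly_in_ideal_of_finite_codim[OF shifted_image_ideal, where F = "F c"]) auto
    qed
  qed (fact no_eigenvector M(1) M(2) uncountable)+
  then show ?thesis by (intro standard_identity_imp_satisfies_PI vector_space_axioms)
qed

theorem bimodule_maps_locally_scalar_if_uncountable:
  fixes scale :: "'k::alg_closed_field \<Rightarrow> 'a::ring_1 \<Rightarrow> 'a"
  assumes "uncountable (UNIV :: 'k set)" "just_infinite scale" "countably_generated scale"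
    and "\<not> satisfies_PI scale"
  shows "bimodule_maps_locally_scalar scale"
  unfolding bimodule_maps_locally_scalar_def
proof (intro allI impI, elim conjE)
  fix J :: "'a set" and f :: "'a \<Rightarrow> 'a"
  assume J: "two_sided_ideal J" "J \<noteq> {0}" and f: "bimodule_map J f"
  have "field_algebra scale"
    using assms(2) unfolding just_infinite_def is_algebra_iff_field_algebra by blast
  then interpret ideal_bimodule_map scale J f
    using J f by (simp add: ideal_bimodule_map_def ideal_bimodule_map_axioms_def)
  obtain M where M: "countable M" "span M = UNIV"
    using countable_spanning_set[OF assms(3)] by blast
  have "\<exists>c w. w \<in> J \<and> w \<noteq> 0 \<and> f w = scale c w"
  proof (rule ccontr)
    assume "\<nexists>c w. w \<in> J \<and> w \<noteq> 0 \<and> f w = scale c w"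
    then have "satisfies_PI scale"
      by (intro satisfies_PI_if_no_eigenvector[OF assms(1,2) M ideal_bimodule_map_axioms J(2)]) blast
    with assms(4) show False ..
  qed
  then obtain c w where "w \<in> J" "w \<noteq> 0" "f w = scale c w" by blast
  then show "\<exists>c J'. two_sided_ideal J' \<and> J' \<noteq> {0} \<and> J' \<subseteq> J \<and> (\<forall>x\<in>J'. f x = scale c x)"
    using eigenspace_ideal by (intro exI[of _ c] exI[of _ "{y \<in> J. f y = scale c y}"]) auto
qed

section \<open>Base change\<close>

locale base_change_hom =
  fixes scale :: "'k::field \<Rightarrow> 'a::ring_1 \<Rightarrow> 'a"
    and iota :: "'k \<Rightarrow> 'K::field"
    and tscale :: "'K \<Rightarrow> 't::ring_1 \<Rightarrow> 't"
    and phi :: "'a \<Rightarrow> 't"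
  assumes base_change: "base_change scale iota tscale phi"
begin

sublocale A: field_algebra scale
  using base_change unfolding base_change_def is_algebra_iff_field_algebra by blast

sublocale T: field_algebra tscale
  using base_change unfolding base_change_def is_algebra_iff_field_algebra by blast

lemma phi_add: "phi (x + y) = phi x + phi y"
  and phi_mult: "phi (x * y) = phi x * phi y"
  and phi_scale: "phi (scale c x) = tscale (iota c) (phi x)"
  and iota_add: "iota (c + d) = iota c + iota d"
  and iota_mult: "iota (c * d) = iota c * iota d"
  and iota_1: "iota 1 = 1"
  and span_range_phi: "T.span (range phi) = UNIV"
  and independent_phi: "A.independent F \<Longrightarrow> inj_on phi F \<and> T.independent (phi ` F)"
  using base_change unfolding base_change_def by blast+

lemma phi_0: "phi 0 = 0"
  using phi_add[of 0 0] by simp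

lemma phi_uminus: "phi (- x) = - phi x"
  using phi_add[of x "- x"] by (simp add: phi_0 add_eq_0_iff)

lemma phi_diff: "phi (x - y) = phi x - phi y"
  using phi_add[of x "- y"] by (simp add: phi_uminus)

lemma phi_sum: "phi (sum h A) = (\<Sum>i\<in>A. phi (h i))"
  by (induction A rule: infinite_finite_induct) (simp_all add: phi_0 phi_add)

lemma iota_0: "iota 0 = 0"
proof -
  have "iota 0 + iota 0 = iota 0 + 0" using iota_add[of 0 0] by simp
  then show ?thesis by (rule add_left_imp_eq)
qed

lemma iota_inverse: "c \<noteq> 0 \<Longrightarrow> iota c * iota (inverse c) = 1"
  using iota_mult[of c "inverse c"] iota_1 by simp

lemma phi_span: "x \<in> A.span F \<Longrightarrow> phi x \<in> T.span (phi ` F)"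
proof (induction rule: A.span_induct)
  show "A.subspace {x. phi x \<in> T.span (phi ` F)}"
    unfolding A.subspace_def
    by (auto simp: phi_0 phi_add phi_scale T.span_zero T.span_add T.span_scale)
qed (auto intro: T.span_base)

lemma infinite_dim_base_change:
  assumes "infinite_dim scale"
  shows "infinite_dim tscale"
  unfolding infinite_dim_def
proof
  assume "\<exists>G. finite G \<and> T.span G = UNIV"
  then obtain G where G: "finite G" "T.span G = UNIV" by blast
  obtain B where B: "A.independent B" "finite B" "card B = Suc (card G)"
    using A.independent_of_any_card assms unfolding infinite_dim_def by metis
  then have "card (phi ` B) \<le> card G"
    using independent_phi[OF B(1)] T.independent_span_bound[OF G(1)] G(2) by auto
  then show False using independent_phi[OF B(1)] B(3) by (simp add: card_image)
qed

definition tensor_sum :: "'i set \<Rightarrow> ('i \<Rightarrow> 'K) \<Rightarrow> ('i \<Rightarrow> 'a) \<Rightarrow> 't" where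
  "tensor_sum Ix \<mu> a = (\<Sum>i\<in>Ix. tscale (\<mu> i) (phi (a i)))"

lemma tensor_sum_exists: "\<exists>Ix \<mu> a. finite Ix \<and> t = tensor_sum (Ix :: 't set) \<mu> a"
proof -
  obtain Ix \<mu> where Ix: "finite Ix" "Ix \<subseteq> range phi" "t = (\<Sum>v\<in>Ix. tscale (\<mu> v) v)"
    using span_range_phi unfolding T.span_explicit by blast
  then have "t = tensor_sum Ix \<mu> (inv phi)"
    unfolding tensor_sum_def by (auto intro!: sum.cong simp: f_inv_into_f)
  with Ix(1) show ?thesis by blast
qed

lemma tensor_sum_add: "tensor_sum Ix \<mu> a + tensor_sum Ix \<mu> b = tensor_sum Ix \<mu> (\<lambda>i. a i + b i)"
  unfolding tensor_sum_def by (simp add: phi_add T.scale_right_distrib sum.distrib)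

lemma tensor_sum_uminus: "- tensor_sum Ix \<mu> a = tensor_sum Ix \<mu> (\<lambda>i. - a i)"
  unfolding tensor_sum_def by (simp add: phi_uminus sum_negf)

lemma tensor_sum_diff: "tensor_sum Ix \<mu> a - tensor_sum Ix \<mu> b = tensor_sum Ix \<mu> (\<lambda>i. a i - b i)"
  unfolding tensor_sum_def by (simp add: phi_diff T.scale_right_diff_distrib sum_subtractf)

lemma tensor_sum_mult_left: "phi z * tensor_sum Ix \<mu> a = tensor_sum Ix \<mu> (\<lambda>i. z * a i)"
  unfolding tensor_sum_def by (simp add: phi_mult sum_distrib_left T.scale_mult_right)

lemma tensor_sum_mult_right: "tensor_sum Ix \<mu> a * phi z = tensor_sum Ix \<mu> (\<lambda>i. a i * z)"
  unfolding tensor_sum_def by (simp add: phi_mult sum_distrib_right T.scale_mult_left)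

lemma tensor_sum_remove:
  "finite Ix \<Longrightarrow> j \<in> Ix \<Longrightarrow> tensor_sum Ix \<mu> a = tscale (\<mu> j) (phi (a j)) + tensor_sum (Ix - {j}) \<mu> a"
  unfolding tensor_sum_def by (rule sum.remove)

lemma tensor_sum_in_span: "(\<And>i. i \<in> Ix \<Longrightarrow> a i \<in> A.span F) \<Longrightarrow> tensor_sum Ix \<mu> a \<in> T.span (phi ` F)"
  unfolding tensor_sum_def by (intro T.span_sum T.span_scale phi_span)

lemma tensor_sum_in_ideal:
  "two_sided_ideal I \<Longrightarrow> (\<And>i. i \<in> Ix \<Longrightarrow> phi (a i) \<in> I) \<Longrightarrow> tensor_sum Ix \<mu> a \<in> I"
  unfolding tensor_sum_def by (intro two_sided_ideal_sum T.two_sided_ideal_scale)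

lemma finite_codim_if_phi_image_subset:
  assumes I: "two_sided_ideal I" and J: "finite_codim scale J" "phi ` J \<subseteq> I"
  shows "finite_codim tscale I"
proof -
  obtain F where F: "finite F" "\<And>x. \<exists>b\<in>A.span F. x - b \<in> J"
    using J(1) unfolding finite_codim_def by blast
  have "\<exists>s\<in>T.span (phi ` F). t - s \<in> I" for t
  proof -
    obtain Ix :: "'t set" and \<mu> a where t: "t = tensor_sum Ix \<mu> a" using tensor_sum_exists by blast
    have "\<forall>i. \<exists>b. b \<in> A.span F \<and> a i - b \<in> J" using F(2) by blast
    then obtain b where "\<forall>i. b i \<in> A.span F \<and> a i - b i \<in> J" by (rule choice[THEN exE])
    then have b: "\<And>i. b i \<in> A.span F" "\<And>i. a i - b i \<in> J" by blast+
    have "t - tensor_sum Ix \<mu> b \<in> I"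
      unfolding t tensor_sum_diff using b(2) J(2) by (intro tensor_sum_in_ideal[OF I]) blast
    moreover have "tensor_sum Ix \<mu> b \<in> T.span (phi ` F)" using b(1) by (rule tensor_sum_in_span)
    ultimately show ?thesis by blast
  qed
  with F(1) show ?thesis unfolding finite_codim_def by blast
qed

lemma tensor_sum_eq_0_if_independent_coeffs:
  assumes "finite Ix"
    and independent: "\<And>\<beta>. (\<Sum>i\<in>Ix. iota (\<beta> i) * \<mu> i) = 0 \<Longrightarrow> \<forall>i\<in>Ix. \<beta> i = 0"
    and "tensor_sum Ix \<mu> b = 0"
  shows "\<forall>i\<in>Ix. b i = 0"
proof -
  obtain B where B: "B \<subseteq> b ` Ix" "A.independent B" "b ` Ix \<subseteq> A.span B"
    by (meson A.basis_exists)
  have "finite B" using finite_subset[OF B(1) finite_imageI[OF assms(1)]] .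
  have "\<forall>i\<in>Ix. \<exists>\<beta>. b i = (\<Sum>e\<in>B. scale (\<beta> e) e)"
    using B(3) unfolding A.span_finite[OF \<open>finite B\<close>] by blast
  then obtain \<beta> where \<beta>: "\<forall>i\<in>Ix. b i = (\<Sum>e\<in>B. scale (\<beta> i e) e)" by (rule bchoice[THEN exE])
  have inj: "inj_on phi B" and indep: "T.independent (phi ` B)"
    using independent_phi[OF B(2)] by blast+
  define u where "u e = (\<Sum>i\<in>Ix. \<mu> i * iota (\<beta> i e))" for e
  have "tensor_sum Ix \<mu> b = (\<Sum>i\<in>Ix. tscale (\<mu> i) (phi (\<Sum>e\<in>B. scale (\<beta> i e) e)))"
    unfolding tensor_sum_def using \<beta> by (intro sum.cong) auto
  also have "\<dots> = (\<Sum>i\<in>Ix. \<Sum>e\<in>B. tscale (\<mu> i * iota (\<beta> i e)) (phi e))"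
    by (simp add: phi_sum phi_scale T.scale_sum_right)
  also have "\<dots> = (\<Sum>e\<in>B. \<Sum>i\<in>Ix. tscale (\<mu> i * iota (\<beta> i e)) (phi e))"
    by (rule sum.swap)
  also have "\<dots> = (\<Sum>e\<in>B. tscale (u e) (phi e))"
    by (simp add: u_def T.scale_sum_left)
  also have "\<dots> = (\<Sum>v\<in>phi ` B. tscale (u (the_inv_into B phi v)) v)"
    by (simp add: sum.reindex[OF inj] the_inv_into_f_f[OF inj])
  finally have "(\<Sum>v\<in>phi ` B. tscale (u (the_inv_into B phi v)) v) = 0"
    using assms(3) by simp
  then have "u (the_inv_into B phi (phi e)) = 0" if "e \<in> B" for e
    using T.independentD[OF indep finite_imageI[OF \<open>finite B\<close>] subset_refl,
        where u = "\<lambda>v. u (the_inv_into B phi v)"] that by blast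
  then have "u e = 0" if "e \<in> B" for e
    using that by (simp add: the_inv_into_f_f[OF inj])
  then have "\<beta> i e = 0" if "i \<in> Ix" "e \<in> B" for i e
    using independent[of "\<lambda>i. \<beta> i e"] that unfolding u_def by (simp add: mult.commute)
  then show ?thesis using \<beta> by simp
qed

end

locale minimal_tensor = base_change_hom scale iota tscale phi
  for scale :: "'k::field \<Rightarrow> 'a::ring_1 \<Rightarrow> 'a" and iota :: "'k \<Rightarrow> 'K::field"
    and tscale :: "'K \<Rightarrow> 't::ring_1 \<Rightarrow> 't" and phi :: "'a \<Rightarrow> 't" +
  fixes I :: "'t set" and Ix :: "'i set" and \<mu> :: "'i \<Rightarrow> 'K" and a :: "'i \<Rightarrow> 'a" and j0 :: 'i
  assumes ideal: "two_sided_ideal I" and finite: "finite Ix" and j0: "j0 \<in> Ix"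
    and mem: "tensor_sum Ix \<mu> a \<in> I" and nonzero: "tensor_sum Ix \<mu> a \<noteq> 0"
    and minimal: "\<And>(Ix' :: 'i set) \<mu>' a'. finite Ix' \<Longrightarrow> card Ix' < card Ix \<Longrightarrow>
      tensor_sum Ix' \<mu>' a' \<in> I \<Longrightarrow> tensor_sum Ix' \<mu>' a' = 0"
begin

lemma coeffs_independent:
  assumes relation: "(\<Sum>i\<in>Ix. iota (\<beta> i) * \<mu> i) = 0"
  shows "\<forall>i\<in>Ix. \<beta> i = 0"
proof (rule ccontr)
  assume "\<not> (\<forall>i\<in>Ix. \<beta> i = 0)"
  then obtain j where j: "j \<in> Ix" "\<beta> j \<noteq> 0" by blast
  define \<kappa> where "\<kappa> = inverse (\<beta> j)"
  define a' where "a' i = a i - scale (\<beta> i * \<kappa>) (a j)" for i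
  have rest: "(\<Sum>i\<in>Ix - {j}. iota (\<beta> i) * \<mu> i) = - (iota (\<beta> j) * \<mu> j)"
    using relation finite j(1) by (simp add: sum.remove add_eq_0_iff)
  have "(\<Sum>i\<in>Ix - {j}. \<mu> i * iota (\<beta> i * \<kappa>)) = (\<Sum>i\<in>Ix - {j}. iota (\<beta> i) * \<mu> i) * iota \<kappa>"
    by (simp add: iota_mult sum_distrib_left sum_distrib_right mult_ac)
  also have "\<dots> = - (\<mu> j * (iota (\<beta> j) * iota \<kappa>))"
    unfolding rest by (simp add: mult_ac)
  also have "\<dots> = - \<mu> j"
    using iota_inverse[OF j(2)] by (simp add: \<kappa>_def)
  finally have "(\<Sum>i\<in>Ix - {j}. \<mu> i * iota (\<beta> i * \<kappa>)) = - \<mu> j" .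
  then have "tensor_sum (Ix - {j}) \<mu> a' = tensor_sum (Ix - {j}) \<mu> a + tscale (\<mu> j) (phi (a j))"
    unfolding tensor_sum_def a'_def
    by (simp add: phi_diff phi_scale T.scale_right_diff_distrib sum_subtractf
        flip: T.scale_sum_left)
  also have "\<dots> = tensor_sum Ix \<mu> a"
    using tensor_sum_remove[OF finite j(1)] by (simp add: add.commute)
  finally have "tensor_sum (Ix - {j}) \<mu> a' = tensor_sum Ix \<mu> a" .
  moreover have "card (Ix - {j}) < card Ix" using finite j(1) by (rule card_Diff1_less)
  ultimately show False using minimal[of "Ix - {j}" \<mu> a'] finite mem nonzero by simp
qed

lemma tensor_sum_subset_eq_0:
  assumes "Ix' \<subseteq> Ix" "tensor_sum Ix' \<mu> b = 0"
  shows "\<forall>i\<in>Ix'. b i = 0"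
proof (rule tensor_sum_eq_0_if_independent_coeffs)
  show "finite Ix'" using assms(1) finite by (rule finite_subset)
  fix \<beta> assume "(\<Sum>i\<in>Ix'. iota (\<beta> i) * \<mu> i) = 0"
  moreover have "(\<Sum>i\<in>Ix. iota (if i \<in> Ix' then \<beta> i else 0) * \<mu> i) =
      (\<Sum>i\<in>Ix'. iota (\<beta> i) * \<mu> i)"
    using assms(1) finite by (intro sum.mono_neutral_cong_right) (auto simp: iota_0)
  ultimately have "(\<Sum>i\<in>Ix. iota (if i \<in> Ix' then \<beta> i else 0) * \<mu> i) = 0" by simp
  then have "\<forall>i\<in>Ix. (if i \<in> Ix' then \<beta> i else 0) = 0" by (rule coeffs_independent)
  then show "\<forall>i\<in>Ix'. \<beta> i = 0" using assms(1) by (metis (full_types) subsetD)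
qed (fact assms(2))

definition lead_sum :: "'a \<Rightarrow> ('i \<Rightarrow> 'a) \<Rightarrow> 't" where
  "lead_sum x b = tensor_sum Ix \<mu> (b(j0 := x))"

definition coeff_ideal :: "'a set" where
  "coeff_ideal = {x. \<exists>b. lead_sum x b \<in> I}"

definition companion :: "'i \<Rightarrow> 'a \<Rightarrow> 'a" where
  "companion i x = (SOME b. lead_sum x b \<in> I) i"

lemma lead_sum_add: "lead_sum x b + lead_sum y c = lead_sum (x + y) (\<lambda>i. b i + c i)"
  unfolding lead_sum_def tensor_sum_add by (rule arg_cong[where f = "tensor_sum Ix \<mu>"]) auto

lemma lead_sum_uminus: "- lead_sum x b = lead_sum (- x) (\<lambda>i. - b i)"
  unfolding lead_sum_def tensor_sum_uminus by (rule arg_cong[where f = "tensor_sum Ix \<mu>"]) auto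

lemma lead_sum_mult_left: "phi z * lead_sum x b = lead_sum (z * x) (\<lambda>i. z * b i)"
  unfolding lead_sum_def tensor_sum_mult_left by (rule arg_cong[where f = "tensor_sum Ix \<mu>"]) auto

lemma lead_sum_mult_right: "lead_sum x b * phi z = lead_sum (x * z) (\<lambda>i. b i * z)"
  unfolding lead_sum_def tensor_sum_mult_right by (rule arg_cong[where f = "tensor_sum Ix \<mu>"]) auto

lemma lead_sum_diff_eq: "lead_sum x b - lead_sum x c = tensor_sum (Ix - {j0}) \<mu> (\<lambda>i. b i - c i)"
proof -
  have "lead_sum x b - lead_sum x c = tensor_sum Ix \<mu> ((\<lambda>i. b i - c i)(j0 := 0))"
    unfolding lead_sum_def tensor_sum_diff by (rule arg_cong[where f = "tensor_sum Ix \<mu>"]) auto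
  also have "\<dots> = tensor_sum (Ix - {j0}) \<mu> (\<lambda>i. b i - c i)"
    using tensor_sum_remove[OF finite j0] by (simp add: phi_0 tensor_sum_def)
  finally show ?thesis .
qed

lemma lead_sum_companion:
  assumes "x \<in> coeff_ideal"
  shows "lead_sum x (\<lambda>i. companion i x) \<in> I"
proof -
  obtain b where "lead_sum x b \<in> I" using assms unfolding coeff_ideal_def by blast
  then show ?thesis unfolding companion_def by (rule someI[where P = "\<lambda>b. lead_sum x b \<in> I"])
qed

lemma companion_eq:
  assumes "lead_sum x b \<in> I" "i \<in> Ix - {j0}"
  shows "companion i x = b i"
proof -
  have x: "x \<in> coeff_ideal" using assms(1) unfolding coeff_ideal_def by blast
  have "tensor_sum (Ix - {j0}) \<mu> (\<lambda>i. companion i x - b i) \<in> I"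
    using two_sided_ideal_diff[OF ideal lead_sum_companion[OF x] assms(1)]
    by (simp add: lead_sum_diff_eq)
  moreover have "card (Ix - {j0}) < card Ix" using finite j0 by (rule card_Diff1_less)
  ultimately have "tensor_sum (Ix - {j0}) \<mu> (\<lambda>i. companion i x - b i) = 0"
    using finite by (intro minimal) auto
  then have "\<forall>i\<in>Ix - {j0}. companion i x - b i = 0"
    by (intro tensor_sum_subset_eq_0) auto
  then show ?thesis using assms(2) by simp
qed

lemma two_sided_ideal_coeff_ideal: "two_sided_ideal coeff_ideal"
  unfolding two_sided_ideal_def coeff_ideal_def
proof (intro conjI ballI allI)
  have "lead_sum 0 (\<lambda>i. 0) = 0"
    unfolding lead_sum_def tensor_sum_def by (simp add: fun_upd_def phi_0 if_distrib)
  then show "0 \<in> {x. \<exists>b. lead_sum x b \<in> I}"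
    using two_sided_ideal_0[OF ideal] by (intro CollectI exI[of _ "\<lambda>i. 0"]) simp
next
  fix x y z assume "x \<in> {x. \<exists>b. lead_sum x b \<in> I}" "y \<in> {x. \<exists>b. lead_sum x b \<in> I}"
  then obtain b c where b: "lead_sum x b \<in> I" and c: "lead_sum y c \<in> I" by blast
  show "x + y \<in> {x. \<exists>b. lead_sum x b \<in> I}"
    using two_sided_ideal_add[OF ideal b c] by (auto simp: lead_sum_add)
  show "- x \<in> {x. \<exists>b. lead_sum x b \<in> I}"
    using two_sided_ideal_uminus[OF ideal b] by (auto simp: lead_sum_uminus)
  show "z * x \<in> {x. \<exists>b. lead_sum x b \<in> I}"
    using two_sided_ideal_mult_left[OF ideal b, of "phi z"] by (auto simp: lead_sum_mult_left)
  show "x * z \<in> {x. \<exists>b. lead_sum x b \<in> I}"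
    using two_sided_ideal_mult_right[OF ideal b, of "phi z"] by (auto simp: lead_sum_mult_right)
qed

lemma coeff_ideal_nonzero: "coeff_ideal \<noteq> {0}"
proof -
  have "lead_sum (a j0) a = tensor_sum Ix \<mu> a" by (simp add: lead_sum_def)
  then have "a j0 \<in> coeff_ideal"
    using mem unfolding coeff_ideal_def by (intro CollectI exI[of _ a]) simp
  moreover have "a j0 \<noteq> 0"
  proof
    assume "a j0 = 0"
    then have "tensor_sum (Ix - {j0}) \<mu> a = tensor_sum Ix \<mu> a"
      using tensor_sum_remove[OF finite j0] by (simp add: phi_0)
    moreover have "card (Ix - {j0}) < card Ix" using finite j0 by (rule card_Diff1_less)
    ultimately show False using minimal[of "Ix - {j0}" \<mu> a] finite mem nonzero by simp
  qed
  ultimately show ?thesis by blast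
qed

lemma bimodule_map_companion:
  assumes "i \<in> Ix - {j0}"
  shows "bimodule_map coeff_ideal (companion i)"
  unfolding bimodule_map_def
proof (intro conjI ballI allI)
  fix x y z assume x: "x \<in> coeff_ideal"
  note lead_x = lead_sum_companion[OF x]
  assume y: "y \<in> coeff_ideal"
  have "lead_sum (x + y) (\<lambda>i. companion i x + companion i y) \<in> I"
    using two_sided_ideal_add[OF ideal lead_x lead_sum_companion[OF y]] by (simp add: lead_sum_add)
  then show "companion i (x + y) = companion i x + companion i y"
    using assms by (rule companion_eq)
next
  fix x z assume x: "x \<in> coeff_ideal"
  note lead_x = lead_sum_companion[OF x]
  have "lead_sum (z * x) (\<lambda>i. z * companion i x) \<in> I"
    using two_sided_ideal_mult_left[OF ideal lead_x, of "phi z"] by (simp add: lead_sum_mult_left)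
  then show "companion i (z * x) = z * companion i x"
    using assms by (rule companion_eq)
  have "lead_sum (x * z) (\<lambda>i. companion i x * z) \<in> I"
    using two_sided_ideal_mult_right[OF ideal lead_x, of "phi z"] by (simp add: lead_sum_mult_right)
  then show "companion i (x * z) = companion i x * z"
    using assms by (rule companion_eq)
qed

lemma lead_sum_eq: "lead_sum x b = tscale (\<mu> j0) (phi x) + tensor_sum (Ix - {j0}) \<mu> b"
  unfolding lead_sum_def tensor_sum_remove[OF finite j0]
  by (simp add: tensor_sum_def)

lemma phi_image_subset_ideal:
  assumes "J' \<subseteq> coeff_ideal"
    and scalar: "\<And>i x. i \<in> Ix - {j0} \<Longrightarrow> x \<in> J' \<Longrightarrow> companion i x = scale (c i) x"
  shows "phi ` J' \<subseteq> I"
proof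
  define \<nu> where "\<nu> = \<mu> j0 + (\<Sum>i\<in>Ix - {j0}. \<mu> i * iota (c i))"
  have "(\<Sum>i\<in>Ix. iota ((c(j0 := 1)) i) * \<mu> i) = \<nu>"
    unfolding \<nu>_def using finite j0
    by (simp add: sum.remove iota_1 mult.commute)
  then have "\<nu> \<noteq> 0"
    using coeffs_independent[of "c(j0 := 1)"] j0 by (metis fun_upd_same one_neq_zero)
  fix t assume "t \<in> phi ` J'"
  then obtain x where x: "x \<in> J'" "t = phi x" by blast
  have "tensor_sum (Ix - {j0}) \<mu> (\<lambda>i. companion i x) = (\<Sum>i\<in>Ix - {j0}. tscale (\<mu> i * iota (c i)) (phi x))"
    unfolding tensor_sum_def using x(1) by (intro sum.cong) (simp_all add: scalar phi_scale)
  then have "lead_sum x (\<lambda>i. companion i x) = tscale \<nu> (phi x)"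
    unfolding lead_sum_eq \<nu>_def by (simp add: T.scale_left_distrib T.scale_sum_left)
  moreover have "lead_sum x (\<lambda>i. companion i x) \<in> I"
    using x(1) assms(1) lead_sum_companion by blast
  ultimately have "tscale (inverse \<nu>) (tscale \<nu> (phi x)) \<in> I"
    using T.two_sided_ideal_scale[OF ideal] by metis
  then show "t \<in> I" using \<open>\<nu> \<noteq> 0\<close> x(2) by simp
qed

end

context base_change_hom
begin

lemma minimal_tensor_exists:
  assumes "two_sided_ideal I" "I \<noteq> {0}"
  obtains Ix :: "'t set" and \<mu> a j0 where "minimal_tensor scale iota tscale phi I Ix \<mu> a j0"
proof -
  define P where "P n \<longleftrightarrow> (\<exists>(Ix :: 't set) \<mu> a. finite Ix \<and> card Ix = n \<and>
    tensor_sum Ix \<mu> a \<in> I \<and> tensor_sum Ix \<mu> a \<noteq> 0)" for n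
  obtain t where "t \<in> I" "t \<noteq> 0" using assms two_sided_ideal_0 by blast
  then have "\<exists>n. P n" unfolding P_def using tensor_sum_exists[of t] by blast
  then have "P (LEAST n. P n)" by (rule LeastI_ex)
  then obtain Ix :: "'t set" and \<mu> a where Ix: "finite Ix" "card Ix = (LEAST n. P n)"
    "tensor_sum Ix \<mu> a \<in> I" "tensor_sum Ix \<mu> a \<noteq> 0"
    unfolding P_def by blast
  have minimal: "tensor_sum Ix' \<mu>' a' = 0"
    if "finite Ix'" "card Ix' < card Ix" "tensor_sum Ix' \<mu>' a' \<in> I" for Ix' :: "'t set" and \<mu>' a'
  proof (rule ccontr)
    assume "tensor_sum Ix' \<mu>' a' \<noteq> 0"
    with that have "P (card Ix')" unfolding P_def by blast
    then have "(LEAST n. P n) \<le> card Ix'" by (rule Least_le)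
    with that(2) Ix(2) show False by simp
  qed
  have "Ix \<noteq> {}" using Ix(4) by (auto simp: tensor_sum_def)
  then obtain j0 where "j0 \<in> Ix" by blast
  have "minimal_tensor scale iota tscale phi I Ix \<mu> a j0"
    using Ix assms(1) \<open>j0 \<in> Ix\<close> minimal
    by (intro minimal_tensor.intro base_change_hom_axioms minimal_tensor_axioms.intro) auto
  then show ?thesis by (rule that)
qed

lemma finite_codim_ideal:
  assumes "just_infinite scale" "bimodule_maps_locally_scalar scale"
    and "two_sided_ideal I" "I \<noteq> {0}"
  shows "finite_codim tscale I"
proof -
  obtain Ix :: "'t set" and \<mu> a j0 where "minimal_tensor scale iota tscale phi I Ix \<mu> a j0"
    using minimal_tensor_exists[OF assms(3,4)] by blast
  then interpret minimal_tensor scale iota tscale phi I Ix \<mu> a j0 .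
  obtain c J' where J': "two_sided_ideal J'" "J' \<noteq> {0}" "J' \<subseteq> coeff_ideal"
    "\<forall>i\<in>Ix - {j0}. \<forall>x\<in>J'. companion i x = scale (c i) x"
  proof -
    have "\<exists>c J'. two_sided_ideal J' \<and> J' \<noteq> {0} \<and> J' \<subseteq> coeff_ideal \<and>
        (\<forall>i\<in>Ix - {j0}. \<forall>x\<in>J'. companion i x = scale (c i) x)"
      using finite
      by (intro bimodule_maps_locally_scalar_family[OF assms(2)] two_sided_ideal_coeff_ideal
          coeff_ideal_nonzero bimodule_map_companion) auto
    with that show ?thesis by blast
  qed
  have "finite_codim scale J'" using assms(1) J'(1,2) unfolding just_infinite_def by blast
  moreover have "phi ` J' \<subseteq> I" using J'(3,4) by (intro phi_image_subset_ideal) auto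
  ultimately show ?thesis using assms(3) finite_codim_if_phi_image_subset by blast
qed

end

theorem just_infinite_base_change:
  assumes "just_infinite scale" "bimodule_maps_locally_scalar scale"
    and "base_change scale iota tscale phi"
  shows "just_infinite tscale"
proof -
  interpret base_change_hom scale iota tscale phi by (rule base_change_hom.intro) fact
  have "is_algebra tscale"
    by (simp add: is_algebra_iff_field_algebra T.field_algebra_axioms)
  moreover have "infinite_dim tscale"
    using assms(1) infinite_dim_base_change unfolding just_infinite_def by blast
  ultimately show ?thesis
    unfolding just_infinite_def using finite_codim_ideal[OF assms(1,2)] by blast
qed

theorem corollary6p4:
  fixes sc :: "'k::alg_closed_field \<Rightarrow> 'a::ring_1 \<Rightarrow> 'a"
  assumes "uncountable (UNIV :: 'k set)"
    and "just_infinite sc"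
    and "countably_generated sc"
    and "\<not> satisfies_PI sc"
  shows "just_infinite sc \<and>
    (\<forall>(iota :: 'k \<Rightarrow> 'K::field) (tsc :: 'K \<Rightarrow> 't::ring_1 \<Rightarrow> 't) (phi :: 'a \<Rightarrow> 't).
       base_change sc iota tsc phi \<longrightarrow> just_infinite tsc)"
  using assms(2) just_infinite_base_change[OF assms(2) bimodule_maps_locally_scalar_if_uncountable[OF assms]]
  by blast

end
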